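(* Let $K,N_\text{t}\ge1$, let $\mathbf{h}_1,\dots,\mathbf{h}_K\in\mathbb{C}^{N_\text{t}}$, let $\mathbf{H}\triangleq[\mathbf{h}_1,\dots,\mathbf{h}_K]\in\mathbb{C}^{N_\text{t}\times K}$ and let $\mathcal{S}\triangleq\mathrm{col}(\mathbf{H})$ be its column space. Let $\lambda\in[0,1]$, $T_w>0$, $\eta_{\mathrm{BS}}\in(0,1]$, $P_{w,0}>0$, $P_{w,\max}>0$, $a_{\max}>0$, $\beta_{\max}>0$, and for each $k$ let $u_k>0$ and $\chi_k\ge0$. Consider the problem (P2) \[ \underset{\mathbf{f}\in\mathbb{C}^{N_\text{t}}}{\text{minimize}}~F(\mathbf{f})\triangleq\lambda\frac{T_w}{\eta_{\mathrm{BS}}}P_{w,0}\|\mathbf{f}\|_2^2+(1-\lambda)\sum_{k=1}^K\frac{\chi_k}{|\mathbf{h}_k^{\mathsf H}\mathbf{f}|^2} \] subject to $|\mathbf{h}_k^{\mathsf H}\mathbf{f}|^2\ge u_k^2/\beta_{\max}^2$ for all $k$, $P_{w,0}\|\mathbf{f}\|_2^2\le P_{w,\max}$, and $|\mathbf{h}_k^{\mathsf H}\mathbf{f}|\le a_{\max}$ for all $k$. For any point $\mathbf{f}^{(i)}\in\mathbb{C}^{N_\text{t}}$, write $a_k^{(i)}=\mathbf{h}_k^{\mathsf H}\mathbf{f}^{(i)}$ and define the affine function \[ \underline{u}_k^{(i)}(\mathbf{f})\triangleq|a_k^{(i)}|^2+2\Re\{(a_k^{(i)})^\ast(\mathbf{h}_k^{\mathsf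 H}\mathbf{f}-a_k^{(i)})\}, \] and consider the subproblem (P2-SCA) \[ \underset{\mathbf{f}\in\mathbb{C}^{N_\text{t}}}{\text{minimize}}~\lambda\frac{T_w}{\eta_{\mathrm{BS}}}P_{w,0}\|\mathbf{f}\|_2^2+(1-\lambda)\sum_{k=1}^K\frac{\chi_k}{\underline{u}_k^{(i)}(\mathbf{f})} \] subject to $\underline{u}_k^{(i)}(\mathbf{f})\ge u_k^2/\beta_{\max}^2$ for all $k$, $P_{w,0}\|\mathbf{f}\|_2^2\le P_{w,\max}$, and $|\mathbf{h}_k^{\mathsf H}\mathbf{f}|\le a_{\max}$ for all $k$. Then: if (P2) is feasible, its minimum value is attained and at least one minimizer lies in $\mathcal{S}$. Moreover, for any $\mathbf{f}^{(i)}$, if (P2-SCA) is feasible, it has a minimizer in $\mathcal{S}$.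
   Context: $(\cdot)^{\mathsf H}$ denotes Hermitian transpose, $(\cdot)^\ast$ complex conjugate, $\Re\{\cdot\}$ real part, $\|\cdot\|_2$ the Euclidean norm. In the paper, $\chi_k=c_ku_k^2$ with $c_k>0$, $\mathbf{f}$ is the BS beamformer, and $\mathbf{f}^{(i)}$ is the current iterate of a successive convex approximation scheme. *)

theory Defs
  imports "HOL-Analysis.Analysis"
begin

definition herm :: "complex ^ 'n \<Rightarrow> complex ^ 'n \<Rightarrow> complex" where
  "herm h f = (\<Sum>j\<in>UNIV. cnj (h $ j) * f $ j)"

definition colspace :: "('k::finite \<Rightarrow> complex ^ 'n) \<Rightarrow> (complex ^ 'n) set" where
  "colspace h = {f. \<exists>c :: 'k \<Rightarrow> complex. f = (\<Sum>k\<in>UNIV. c k *s h k)}"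

definition F_P2 :: "real \<Rightarrow> real \<Rightarrow> real \<Rightarrow> real \<Rightarrow> ('k::finite \<Rightarrow> real)
    \<Rightarrow> ('k \<Rightarrow> complex ^ 'n) \<Rightarrow> complex ^ 'n \<Rightarrow> real" where
  "F_P2 lam Tw eta Pw0 chi h f =
     lam * (Tw / eta) * Pw0 * (norm f)^2
     + (1 - lam) * (\<Sum>k\<in>UNIV. chi k / (cmod (herm (h k) f))^2)"

definition feasible_P2 :: "real \<Rightarrow> real \<Rightarrow> real \<Rightarrow> real \<Rightarrow> ('k::finite \<Rightarrow> real)
    \<Rightarrow> ('k \<Rightarrow> complex ^ 'n) \<Rightarrow> complex ^ 'n \<Rightarrow> bool" where
  "feasible_P2 Pw0 Pwmax amax betamax u h f \<longleftrightarrow>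
     (\<forall>k. (cmod (herm (h k) f))^2 \<ge> (u k)^2 / betamax^2)
     \<and> Pw0 * (norm f)^2 \<le> Pwmax
     \<and> (\<forall>k. cmod (herm (h k) f) \<le> amax)"

definition ulin :: "complex ^ 'n \<Rightarrow> complex ^ 'n \<Rightarrow> complex ^ 'n \<Rightarrow> real" where
  "ulin hk fi f = (let a = herm hk fi in
     (cmod a)^2 + 2 * Re (cnj a * (herm hk f - a)))"

definition F_SCA :: "real \<Rightarrow> real \<Rightarrow> real \<Rightarrow> real \<Rightarrow> ('k::finite \<Rightarrow> real)
    \<Rightarrow> ('k \<Rightarrow> complex ^ 'n) \<Rightarrow> complex ^ 'n \<Rightarrow> complex ^ 'n \<Rightarrow> real" where
  "F_SCA lam Tw eta Pw0 chi h fi f =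
     lam * (Tw / eta) * Pw0 * (norm f)^2
     + (1 - lam) * (\<Sum>k\<in>UNIV. chi k / ulin (h k) fi f)"

definition feasible_SCA :: "real \<Rightarrow> real \<Rightarrow> real \<Rightarrow> real \<Rightarrow> ('k::finite \<Rightarrow> real)
    \<Rightarrow> ('k \<Rightarrow> complex ^ 'n) \<Rightarrow> complex ^ 'n \<Rightarrow> complex ^ 'n \<Rightarrow> bool" where
  "feasible_SCA Pw0 Pwmax amax betamax u h fi f \<longleftrightarrow>
     (\<forall>k. ulin (h k) fi f \<ge> (u k)^2 / betamax^2)
     \<and> Pw0 * (norm f)^2 \<le> Pwmax
     \<and> (\<forall>k. cmod (herm (h k) f) \<le> amax)"

end

theory Submission imports Defs begin

text \<open>
  Both problems depend on a beamformer \<open>f\<close> only through the responses \<open>h\<^sub>k\<^sup>H f\<close>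
  and through \<open>\<parallel>f\<parallel>\<close>, monotonically in the latter. Viewing \<open>\<complex>\<^sup>N\<close> as a real inner
  product space, \<open>Re (h\<^sup>H f)\<close> and \<open>Im (h\<^sup>H f)\<close> are the inner products of \<open>f\<close> with
  \<open>h\<close> and \<open>\<i> h\<close>, so the orthogonal projection onto the real span of all \<open>h\<^sub>k\<close> and
  \<open>\<i> h\<^sub>k\<close> (which lies in \<open>col(H)\<close>) preserves every response and does not increase
  the norm. The power budget makes the feasible sets compact, and the lower bounds
  on the responses keep the objectives continuous on them; hence a minimizer exists,
  and its projection is again a minimizer.
\<close>

lemma bounded_linear_herm: "bounded_linear (herm h)"
  unfolding herm_def by (intro bounded_linear_intros bounded_linear_vec_nth)

lemma Re_herm: "Re (herm h z) = inner h z"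
  by (simp add: herm_def inner_vec_def inner_complex_def Re_sum)

lemma Im_herm: "Im (herm h z) = inner (\<i> *s h) z"
  by (simp add: herm_def inner_vec_def inner_complex_def Im_sum)

lemma herm_eq_0_if_orthogonal:
  assumes "orthogonal h z" and "orthogonal (\<i> *s h) z"
  shows "herm h z = 0"
  using assms by (simp add: complex_eq_iff Re_herm Im_herm orthogonal_def)

lemma subspace_colspace: "subspace (colspace h)"
  unfolding subspace_def
proof (intro conjI ballI allI)
  show "0 \<in> colspace h"
    unfolding colspace_def by (auto intro: exI[of _ "\<lambda>_. 0"])
next
  fix x y
  assume "x \<in> colspace h" "y \<in> colspace h"
  then obtain a b where "x = (\<Sum>k\<in>UNIV. a k *s h k)" "y = (\<Sum>k\<in>UNIV. b k *s h k)"
    unfolding colspace_def by blast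
  then have "x + y = (\<Sum>k\<in>UNIV. (a k + b k) *s h k)"
    by (simp add: vector_sadd_rdistrib sum.distrib)
  then show "x + y \<in> colspace h"
    unfolding colspace_def mem_Collect_eq by (rule exI[of _ "\<lambda>k. a k + b k"])
next
  fix r :: real and x
  assume "x \<in> colspace h"
  then obtain a where "x = (\<Sum>k\<in>UNIV. a k *s h k)"
    unfolding colspace_def by blast
  moreover have scaleR_smult: "r *\<^sub>R (c *s v) = (of_real r * c) *s v" for c and v :: "complex ^ 'n"
    by (simp add: vec_eq_iff) (simp add: scaleR_conv_of_real)
  ultimately have "r *\<^sub>R x = (\<Sum>k\<in>UNIV. (of_real r * a k) *s h k)"
    by (simp only: scaleR_sum_right scaleR_smult)
  then show "r *\<^sub>R x \<in> colspace h"
    unfolding colspace_def mem_Collect_eq by (rule exI[of _ "\<lambda>k. of_real r * a k"])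
qed

lemma scaled_column_in_colspace: "c *s h k \<in> colspace h"
proof -
  have "(\<Sum>j\<in>UNIV. (if j = k then c else 0) *s h j) = (\<Sum>j\<in>UNIV. if j = k then c *s h j else 0)"
    by (rule sum.cong) auto
  then have "c *s h k = (\<Sum>j\<in>UNIV. (if j = k then c else 0) *s h j)"
    by simp
  then show ?thesis
    unfolding colspace_def mem_Collect_eq by (rule exI[of _ "\<lambda>j. if j = k then c else 0"])
qed

lemma colspace_projection_exists:
  fixes h :: "'k::finite \<Rightarrow> complex ^ 'n"
  shows "\<exists>p\<in>colspace h. (\<forall>k. herm (h k) p = herm (h k) f) \<and> norm p \<le> norm f"
proof -
  define B where "B = range h \<union> range (\<lambda>k. \<i> *s h k)"
  obtain p z where p: "p \<in> span B" and z: "\<And>w. w \<in> span B \<Longrightarrow> orthogonal z w"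
    and f: "f = p + z"
    using orthogonal_subspace_decomp_exists[of B f] by blast
  have "B \<subseteq> colspace h"
    unfolding B_def using scaled_column_in_colspace[of 1] scaled_column_in_colspace[of \<i>] by auto
  then have p_colspace: "p \<in> colspace h"
    using p span_minimal[OF _ subspace_colspace] by blast
  have "herm (h k) z = 0" for k
  proof (rule herm_eq_0_if_orthogonal)
    have "h k \<in> span B" "\<i> *s h k \<in> span B"
      unfolding B_def by (simp_all add: span_base)
    then show "orthogonal (h k) z" "orthogonal (\<i> *s h k) z"
      using z orthogonal_commute by blast+
  qed
  then have same_response: "herm (h k) p = herm (h k) f" for k
    by (simp add: f linear_add[OF bounded_linear.linear[OF bounded_linear_herm]])
  have "(norm f)\<^sup>2 = (norm p)\<^sup>2 + (norm z)\<^sup>2"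
    unfolding f using z[OF p] by (intro norm_add_Pythagorean) (simp add: orthogonal_commute)
  then have "(norm p)\<^sup>2 \<le> (norm f)\<^sup>2"
    by simp
  then have "norm p \<le> norm f"
    by (rule power2_le_imp_le) simp
  with p_colspace same_response show ?thesis
    by blast
qed

lemma colspace_minimizer_exists:
  fixes h :: "'k::finite \<Rightarrow> complex ^ 'n" and J :: "complex ^ 'n \<Rightarrow> real"
  assumes "compact S" and "S \<noteq> {}" and "continuous_on S J"
    and invariant: "\<And>f p. f \<in> S \<Longrightarrow> (\<And>k. herm (h k) p = herm (h k) f) \<Longrightarrow> norm p \<le> norm f
      \<Longrightarrow> p \<in> S \<and> J p \<le> J f"
  shows "\<exists>fopt\<in>colspace h. fopt \<in> S \<and> (\<forall>f\<in>S. J fopt \<le> J f)"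
proof -
  obtain fmin where fmin: "fmin \<in> S" "\<And>f. f \<in> S \<Longrightarrow> J fmin \<le> J f"
    using continuous_attains_inf[OF assms(1-3)] by blast
  obtain p where "p \<in> colspace h" "\<And>k. herm (h k) p = herm (h k) fmin" "norm p \<le> norm fmin"
    using colspace_projection_exists by blast
  moreover from this have "p \<in> S" "J p \<le> J fmin"
    using invariant[OF fmin(1)] by blast+
  ultimately show ?thesis
    using fmin(2) by (blast intro: order_trans)
qed

lemma response_problem_has_colspace_minimizer:
  fixes h :: "'k::finite \<Rightarrow> complex ^ 'n" and g :: "'k \<Rightarrow> complex \<Rightarrow> real"
  assumes g: "\<And>k. continuous_on UNIV (g k)"
    and c: "\<And>k. c k > 0" and "A \<ge> 0" and "Pz > 0"
    and feasible_iff: "\<And>f. feasible f \<longleftrightarrow> (\<forall>k. c k \<le> g k (herm (h k) f))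
                     \<and> Pz * (norm f)\<^sup>2 \<le> Pmax \<and> (\<forall>k. cmod (herm (h k) f) \<le> amax)"
    and J: "\<And>f. J f = A * (norm f)\<^sup>2 + B * (\<Sum>k\<in>UNIV. chi k / g k (herm (h k) f))"
    and "\<exists>f. feasible f"
  shows "\<exists>fopt\<in>colspace h. feasible fopt \<and> (\<forall>f. feasible f \<longrightarrow> J fopt \<le> J f)"
proof -
  define S where "S = Collect feasible"
  have herm_cont: "continuous_on UNIV (herm (h k))" for k
    by (simp add: linear_continuous_on bounded_linear_herm)
  have response_cont: "continuous_on UNIV (\<lambda>f. g k (herm (h k) f))" for k
    using continuous_on_compose2[OF g herm_cont] by simp
  have "closed S"
    unfolding S_def feasible_iff
    by (intro closed_Collect_conj closed_Collect_all closed_Collect_le continuous_intros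
        response_cont herm_cont)
  moreover have "bounded S"
  proof -
    have "norm f \<le> sqrt (Pmax / Pz)" if "f \<in> S" for f
      using that \<open>Pz > 0\<close> by (simp add: S_def feasible_iff real_le_rsqrt pos_le_divide_eq mult.commute)
    then show ?thesis
      unfolding bounded_iff by blast
  qed
  ultimately have compact: "compact S"
    by (simp add: compact_eq_bounded_closed)
  have nonempty: "S \<noteq> {}"
    using \<open>\<exists>f. feasible f\<close> by (simp add: S_def)
  have "g k (herm (h k) f) \<noteq> 0" if "f \<in> S" for f k
  proof -
    have "c k \<le> g k (herm (h k) f)"
      using that by (simp add: S_def feasible_iff)
    with c[of k] show ?thesis by linarith
  qed
  then have continuous: "continuous_on S J"
    unfolding J[abs_def] by (intro continuous_intros continuous_on_subset[OF response_cont]) auto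
  have invariant: "p \<in> S \<and> J p \<le> J f"
    if "f \<in> S" "\<And>k. herm (h k) p = herm (h k) f" "norm p \<le> norm f" for f p
  proof -
    have "(norm p)\<^sup>2 \<le> (norm f)\<^sup>2"
      using \<open>norm p \<le> norm f\<close> by (simp add: power_mono)
    then have "Pz * (norm p)\<^sup>2 \<le> Pz * (norm f)\<^sup>2" and "A * (norm p)\<^sup>2 \<le> A * (norm f)\<^sup>2"
      using \<open>A \<ge> 0\<close> \<open>Pz > 0\<close> by (simp_all add: mult_left_mono)
    with that show ?thesis
      by (auto simp: S_def feasible_iff J)
  qed
  have "\<exists>fopt\<in>colspace h. fopt \<in> S \<and> (\<forall>f\<in>S. J fopt \<le> J f)"
    using compact nonempty continuous invariant by (rule colspace_minimizer_exists)
  then show ?thesis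
    unfolding S_def by blast
qed

theorem lemma2:
  fixes h :: "'k::finite \<Rightarrow> complex ^ 'n"
    and lam Tw eta Pw0 Pwmax amax betamax :: real
    and u chi :: "'k \<Rightarrow> real"
  assumes "0 \<le> lam" "lam \<le> 1" "Tw > 0" "0 < eta" "eta \<le> 1"
    and "Pw0 > 0" "Pwmax > 0" "amax > 0" "betamax > 0"
    and "\<And>k. u k > 0" "\<And>k. chi k \<ge> 0"
  shows "((\<exists>f. feasible_P2 Pw0 Pwmax amax betamax u h f) \<longrightarrow>
           (\<exists>fopt \<in> colspace h. feasible_P2 Pw0 Pwmax amax betamax u h fopt \<and>
              (\<forall>f. feasible_P2 Pw0 Pwmax amax betamax u h f \<longrightarrow>
                   F_P2 lam Tw eta Pw0 chi h fopt \<le> F_P2 lam Tw eta Pw0 chi h f)))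
       \<and> (\<forall>fi. (\<exists>f. feasible_SCA Pw0 Pwmax amax betamax u h fi f) \<longrightarrow>
           (\<exists>fopt \<in> colspace h. feasible_SCA Pw0 Pwmax amax betamax u h fi fopt \<and>
              (\<forall>f. feasible_SCA Pw0 Pwmax amax betamax u h fi f \<longrightarrow>
                   F_SCA lam Tw eta Pw0 chi h fi fopt \<le> F_SCA lam Tw eta Pw0 chi h fi f)))"
proof -
  have A: "lam * (Tw / eta) * Pw0 \<ge> 0"
    using assms by simp
  have c: "(u k)\<^sup>2 / betamax\<^sup>2 > 0" for k
    using assms(9) assms(10)[of k] by simp
  show ?thesis
  proof (intro conjI allI impI)
    assume "\<exists>f. feasible_P2 Pw0 Pwmax amax betamax u h f"
    then show "\<exists>fopt \<in> colspace h. feasible_P2 Pw0 Pwmax amax betamax u h fopt \<and>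
        (\<forall>f. feasible_P2 Pw0 Pwmax amax betamax u h f \<longrightarrow>
             F_P2 lam Tw eta Pw0 chi h fopt \<le> F_P2 lam Tw eta Pw0 chi h f)"
      by (intro response_problem_has_colspace_minimizer[where g = "\<lambda>_ z. (cmod z)\<^sup>2",
            OF _ c A \<open>Pw0 > 0\<close>])
        (simp_all add: continuous_intros feasible_P2_def F_P2_def)
  next
    fix fi
    assume "\<exists>f. feasible_SCA Pw0 Pwmax amax betamax u h fi f"
    then show "\<exists>fopt \<in> colspace h. feasible_SCA Pw0 Pwmax amax betamax u h fi fopt \<and>
        (\<forall>f. feasible_SCA Pw0 Pwmax amax betamax u h fi f \<longrightarrow>
             F_SCA lam Tw eta Pw0 chi h fi fopt \<le> F_SCA lam Tw eta Pw0 chi h fi f)"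
      by (intro response_problem_has_colspace_minimizer[where
            g = "\<lambda>k z. let a = herm (h k) fi in (cmod a)\<^sup>2 + 2 * Re (cnj a * (z - a))",
            OF _ c A \<open>Pw0 > 0\<close>])
        (simp_all add: continuous_intros feasible_SCA_def F_SCA_def ulin_def Let_def)
  qed
qed

end
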